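(* Let $G$ be a finite simple undirected graph and let $A, B, C$ be $\omega(G)$-cliques of $G$ that are pairwise adjacent in $\mathsf{TJ}_{\omega(G)}(G)$. Then $A \cap B = B \cap C = A \cap C$.
   Context: $\omega(G)$ is the maximum size of a clique (set of pairwise adjacent vertices) of $G$. For an integer $k$, $\mathsf{TJ}_k(G)$ (token jumping graph) is the graph whose vertices are the cliques of $G$ of size $k$, two such cliques $C, C'$ being adjacent iff $|C \setminus C'| = |C' \setminus C| = 1$. *)

theory Defs
  imports Main
begin

definition simple_graph :: "'a set \<Rightarrow> ('a \<Rightarrow> 'a \<Rightarrow> bool) \<Rightarrow> bool" where
  "simple_graph V E \<longleftrightarrow> finite V \<and> (\<forall>x y. E x y \<longrightarrow> x \<in> V \<and> y \<in> V)
     \<and> (\<forall>x. \<not> E x x) \<and> (\<forall>x y. E x y \<longrightarrow> E y x)"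

definition is_clique :: "'a set \<Rightarrow> ('a \<Rightarrow> 'a \<Rightarrow> bool) \<Rightarrow> 'a set \<Rightarrow> bool" where
  "is_clique V E K \<longleftrightarrow> K \<subseteq> V \<and> (\<forall>x\<in>K. \<forall>y\<in>K. x \<noteq> y \<longrightarrow> E x y)"

definition clique_number :: "'a set \<Rightarrow> ('a \<Rightarrow> 'a \<Rightarrow> bool) \<Rightarrow> nat" where
  "clique_number V E = Max (card ` {K. is_clique V E K})"

text \<open>Vertices of TJ_k(G): cliques of size k.\<close>
definition k_cliques :: "'a set \<Rightarrow> ('a \<Rightarrow> 'a \<Rightarrow> bool) \<Rightarrow> nat \<Rightarrow> 'a set set" where
  "k_cliques V E k = {K. is_clique V E K \<and> card K = k}"

definition TJ_adj :: "'a set \<Rightarrow> 'a set \<Rightarrow> bool" where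
  "TJ_adj C C' \<longleftrightarrow> card (C - C') = 1 \<and> card (C' - C) = 1"

end

theory Submission
  imports Defs
begin

text \<open>If three maximum cliques are pairwise adjacent in the token jumping graph
but some s \<in> A \<inter> B is missing from C, then s is the unique vertex of A - C and
of B - C. Hence the vertices a of A - B and b of B - A both lie in C, so they are
adjacent, and A \<union> B = insert b A is a clique larger than the maximum.
Therefore A \<inter> B \<subseteq> C, and since all three pairwise intersections have
\<omega>(G) - 1 elements, they coincide.\<close>

lemma clique_card_le_clique_number:
  assumes "finite V" and "is_clique V E K"
  shows "card K \<le> clique_number V E"
proof -
  have "{K. is_clique V E K} \<subseteq> Pow V"
    unfolding is_clique_def by blast
  then have "finite {K. is_clique V E K}"
    using assms(1) by (meson finite_Pow_iff finite_subset)
  then show ?thesis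
    unfolding clique_number_def using assms(2) by simp
qed

lemma is_clique_Un:
  assumes "is_clique V E A" and "is_clique V E B"
    and sym: "\<And>x y. E x y \<Longrightarrow> E y x"
    and cross: "\<And>x y. x \<in> A - B \<Longrightarrow> y \<in> B - A \<Longrightarrow> E x y"
  shows "is_clique V E (A \<union> B)"
  unfolding is_clique_def
proof (intro conjI ballI impI)
  show "A \<union> B \<subseteq> V"
    using assms(1,2) unfolding is_clique_def by blast
next
  fix x y assume "x \<in> A \<union> B" "y \<in> A \<union> B" "x \<noteq> y"
  then consider "x \<in> A" "y \<in> A" | "x \<in> B" "y \<in> B" | "x \<in> A - B" "y \<in> B - A"
    | "x \<in> B - A" "y \<in> A - B"
    by blast
  then show "E x y"
    using assms(1,2) \<open>x \<noteq> y\<close> sym cross unfolding is_clique_def by cases blast+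
qed

lemma TJ_adj_card_Int:
  assumes "finite X" and "TJ_adj X Y"
  shows "card (X \<inter> Y) = card X - 1"
  using assms card_Int_Diff[of X Y] unfolding TJ_adj_def by simp

lemma TJ_triangle_Int_subset:
  assumes sym: "\<And>x y. E x y \<Longrightarrow> E y x"
    and cliques: "is_clique V E A" "is_clique V E B" "is_clique V E C"
    and "finite A" and maximum: "\<And>K. is_clique V E K \<Longrightarrow> card K \<le> card A"
    and "TJ_adj A B" "TJ_adj B C" "TJ_adj A C"
  shows "A \<inter> B \<subseteq> C"
proof
  fix s assume s: "s \<in> A \<inter> B"
  show "s \<in> C"
  proof (rule ccontr)
    assume "s \<notin> C"
    obtain a where a: "A - B = {a}"
      using \<open>TJ_adj A B\<close> card_1_singletonE unfolding TJ_adj_def by blast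
    obtain b where b: "B - A = {b}"
      using \<open>TJ_adj A B\<close> card_1_singletonE unfolding TJ_adj_def by blast
    obtain x where "A - C = {x}"
      using \<open>TJ_adj A C\<close> card_1_singletonE unfolding TJ_adj_def by blast
    obtain y where "B - C = {y}"
      using \<open>TJ_adj B C\<close> card_1_singletonE unfolding TJ_adj_def by blast
    have "A - C = {s}" "B - C = {s}"
      using \<open>A - C = {x}\<close> \<open>B - C = {y}\<close> s \<open>s \<notin> C\<close> by auto
    then have "a \<in> C" "b \<in> C" "a \<noteq> b"
      using a b s by auto
    then have "E a b"
      using \<open>is_clique V E C\<close> unfolding is_clique_def by blast
    have "is_clique V E (A \<union> B)"
    proof (rule is_clique_Un[OF cliques(1,2) sym])
      fix x y assume "x \<in> A - B" "y \<in> B - A"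
      then show "E x y"
        using a b \<open>E a b\<close> by simp
    qed
    moreover have "A \<union> B = insert b A" "b \<notin> A"
      using b by auto
    ultimately show False
      using maximum[of "A \<union> B"] \<open>finite A\<close> by simp
  qed
qed

theorem lemma4p2:
  fixes V :: "'a set" and E :: "'a \<Rightarrow> 'a \<Rightarrow> bool" and A B C :: "'a set"
  assumes "simple_graph V E"
    and "A \<in> k_cliques V E (clique_number V E)"
    and "B \<in> k_cliques V E (clique_number V E)"
    and "C \<in> k_cliques V E (clique_number V E)"
    and "TJ_adj A B" and "TJ_adj B C" and "TJ_adj A C"
  shows "A \<inter> B = B \<inter> C \<and> B \<inter> C = A \<inter> C"
proof -
  define k where "k = clique_number V E"
  have "finite V" and sym: "\<And>x y. E x y \<Longrightarrow> E y x"
    using assms(1) unfolding simple_graph_def by blast+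
  have cliques: "is_clique V E A" "is_clique V E B" "is_clique V E C"
    and cards: "card A = k" "card B = k" "card C = k"
    using assms(2-4) unfolding k_cliques_def k_def by auto
  have finite: "finite A" "finite B"
    using cliques \<open>finite V\<close> finite_subset unfolding is_clique_def by blast+
  have "A \<inter> B \<subseteq> C"
    using TJ_triangle_Int_subset[OF sym cliques finite(1) _ assms(5-7)]
      clique_card_le_clique_number[OF \<open>finite V\<close>] cards(1) k_def by simp
  moreover have "card (A \<inter> B) = k - 1" "card (A \<inter> C) = k - 1" "card (B \<inter> C) = k - 1"
    using TJ_adj_card_Int[OF finite(1) assms(5)] TJ_adj_card_Int[OF finite(1) assms(7)]
      TJ_adj_card_Int[OF finite(2) assms(6)] cards by simp_all
  ultimately have "A \<inter> B = A \<inter> C" "A \<inter> B = B \<inter> C"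
    using card_subset_eq[of "A \<inter> C" "A \<inter> B"] card_subset_eq[of "B \<inter> C" "A \<inter> B"] finite
    by auto
  then show ?thesis by simp
qed

end
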